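(* In the two-superobserver, two-friend extended Wigner's friend scenario (defined in the context), there exists a superobserver possibility set $S \subseteq \{0,1\}^2\times\{1,2\}^2$ that satisfies Possibilistic No-Signalling but admits no Possibilistic Local Friendliness model. That is, there is no set $T\subseteq\{0,1\}^4\times\{1,2\}^2$ that is a Possibilistic Local Friendliness model reproducing $S$.
   Context: Scenario. Two space-like separated superobservers, Alice and Bob, have friends Charlie and Debbie respectively. Each friend measures a system inside a sealed laboratory. - Charlie and Debbie record outcomes $C=c\in\{0,1\}$ and $D=d\in\{0,1\}$. - Alice chooses an intervention (setting) $X=x\in\{1,2\}$ and observes $A=a\in\{0,1\}$. Bob chooses $Y=y\in\{1,2\}$ and observes $B=b\in\{0,1\}$. - The setting $X=1$ means Alice opens Charlie's lab, asks for his result and sets $A=C$. The setting $Y=1$ means Bob asks Debbie and sets $B=D$. The settings $X=2$ and $Y=2$ are arbitrary other measurements. - Spacetime relations: $A$ lies in the future light cone of $X$, and $B$ lies in the future light cone of $Y$. $X$ is not in the past light cone of any of $B,Y,C,D$. $Y$ is not in the past light cone of any of $A,X,C,D$. Superobserver possibility set. This is a set $S$ of tuples $(a,b,x,y)$; its elements are the tuples called possible. $S$ satisfies Possibilistic No-Signalling (PNS) when both of the following hold: - For all $x,a$, whether some $b$ has $(a,b,x,y)\in S$ does not depend on $y$. - For all $y,b$, whether some $a$ has $(a,b,x,y)\in S$ does not depend on $x$. Possibilistic Local Friendliness (PLF) model. This is the conjunction of Absoluteness of Observed Events and Possibilistic Local Agency, formalized as follows. - Absoluteness of Observed Events (AOE):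 every observed event has a single absolute value. Accordingly, the model is a set $T$ of possible joint value assignments $(a,b,c,d,x,y)$ to all six variables. - Protocol constraint: every $t\in T$ with $x=1$ has $a=c$, and every $t\in T$ with $y=1$ has $b=d$. - A partial assignment $E$ (values for some subset of the variables) is called possible if it agrees with some element of $T$. - Possibilistic Local Agency (PLA): if $E$ is possible, then for any intervention $Z\in\{X,Y\}$ not in the past light cone of any variable assigned in $E$, and for every value $z$ of $Z$, the assignment $E$ together with $Z=z$ is possible. - Reproducing $S$: the projection of $T$ onto the coordinates $(a,b,x,y)$ equals $S$. *)

theory Defs
  imports Main
begin

text \<open>Outcomes a,b,c,d range over {0,1}; settings x,y range over {1,2} (as naturals).
  A superobserver possibility set is a set of tuples (a,b,x,y);
  a full joint assignment is a tuple (a,b,c,d,x,y).\<close>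

definition outcomes :: "nat set" where "outcomes = {0,1}"
definition settings :: "nat set" where "settings = {1,2}"

definition SO_space :: "(nat \<times> nat \<times> nat \<times> nat) set" where
  "SO_space = outcomes \<times> outcomes \<times> settings \<times> settings"

definition full_space :: "(nat \<times> nat \<times> nat \<times> nat \<times> nat \<times> nat) set" where
  "full_space = outcomes \<times> outcomes \<times> outcomes \<times> outcomes \<times> settings \<times> settings"

definition PNS :: "(nat \<times> nat \<times> nat \<times> nat) set \<Rightarrow> bool" where
  "PNS S \<longleftrightarrow>
     (\<forall>x\<in>settings. \<forall>a\<in>outcomes. \<forall>y\<in>settings. \<forall>y'\<in>settings.
        (\<exists>b. (a,b,x,y) \<in> S) \<longleftrightarrow> (\<exists>b. (a,b,x,y') \<in> S)) \<and>
     (\<forall>y\<in>settings. \<forall>b\<in>outcomes. \<forall>x\<in>settings. \<forall>x'\<in>settings.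
        (\<exists>a. (a,b,x,y) \<in> S) \<longleftrightarrow> (\<exists>a. (a,b,x',y) \<in> S))"

datatype var = VA | VB | VC | VD | VX | VY

fun val :: "nat \<times> nat \<times> nat \<times> nat \<times> nat \<times> nat \<Rightarrow> var \<Rightarrow> nat" where
  "val (a,b,c,d,x,y) VA = a"
| "val (a,b,c,d,x,y) VB = b"
| "val (a,b,c,d,x,y) VC = c"
| "val (a,b,c,d,x,y) VD = d"
| "val (a,b,c,d,x,y) VX = x"
| "val (a,b,c,d,x,y) VY = y"

definition agrees :: "(var \<Rightarrow> nat option) \<Rightarrow> nat \<times> nat \<times> nat \<times> nat \<times> nat \<times> nat \<Rightarrow> bool" where
  "agrees E t \<longleftrightarrow> (\<forall>v u. E v = Some u \<longrightarrow> val t v = u)"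

definition possible :: "(nat \<times> nat \<times> nat \<times> nat \<times> nat \<times> nat) set \<Rightarrow> (var \<Rightarrow> nat option) \<Rightarrow> bool" where
  "possible T E \<longleftrightarrow> (\<exists>t\<in>T. agrees E t)"

text \<open>Variables V such that X (resp. Y) is NOT in the past light cone of V.
  X is in the past light cone of A (and of itself); Y of B (and of itself).\<close>
definition not_future_X :: "var set" where "not_future_X = {VB, VY, VC, VD}"
definition not_future_Y :: "var set" where "not_future_Y = {VA, VX, VC, VD}"

definition PLA :: "(nat \<times> nat \<times> nat \<times> nat \<times> nat \<times> nat) set \<Rightarrow> bool" where
  "PLA T \<longleftrightarrow> (\<forall>E. possible T E \<longrightarrow>
     (dom E \<subseteq> not_future_X \<longrightarrow> (\<forall>z\<in>settings. possible T (E(VX \<mapsto> z)))) \<and>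
     (dom E \<subseteq> not_future_Y \<longrightarrow> (\<forall>z\<in>settings. possible T (E(VY \<mapsto> z)))))"

definition protocol :: "(nat \<times> nat \<times> nat \<times> nat \<times> nat \<times> nat) set \<Rightarrow> bool" where
  "protocol T \<longleftrightarrow> (\<forall>(a,b,c,d,x,y)\<in>T. (x = 1 \<longrightarrow> a = c) \<and> (y = 1 \<longrightarrow> b = d))"

definition proj_SO :: "(nat \<times> nat \<times> nat \<times> nat \<times> nat \<times> nat) set \<Rightarrow> (nat \<times> nat \<times> nat \<times> nat) set" where
  "proj_SO T = (\<lambda>(a,b,c,d,x,y). (a,b,x,y)) ` T"

text \<open>T is a PLF model (AOE: a set of joint assignments; protocol; PLA) reproducing S.\<close>
definition PLF_model :: "(nat \<times> nat \<times> nat \<times> nat \<times> nat \<times> nat) set \<Rightarrow> (nat \<times> nat \<times> nat \<times> nat) set \<Rightarrow> bool" where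
  "PLF_model T S \<longleftrightarrow> T \<subseteq> full_space \<and> protocol T \<and> PLA T \<and> proj_SO T = S"

end

theory Submission
  imports Defs
begin

text \<open>Hardy's paradox. In the possibility set that forbids only (a,b) = (1,1) at settings (1,1)
  and (a,b) = (0,0) at settings (1,2) and (2,1), take a joint assignment with a = b = 0 at
  settings (2,2). By Local Agency, Alice may switch to x = 1 while c, d, b, y stay fixed, so the
  tuple (c,0,1,2) is possible and c = 1; symmetrically d = 1. Switching both settings to 1 keeps
  c = d = 1 and yields the forbidden (1,1,1,1).\<close>

definition hardy_set :: "(nat \<times> nat \<times> nat \<times> nat) set" where
  "hardy_set = SO_space - {(1,1,1,1), (0,0,1,2), (0,0,2,1)}"

lemma hardy_set_subset_SO_space: "hardy_set \<subseteq> SO_space"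
  by (auto simp: hardy_set_def)

lemma PNS_hardy_set: "PNS hardy_set"
  unfolding PNS_def hardy_set_def SO_space_def outcomes_def settings_def by auto

lemma agrees_empty [simp]: "agrees Map.empty t"
  by (simp add: agrees_def)

lemma agrees_fun_upd [simp]:
  "E v = None \<Longrightarrow> agrees (E(v \<mapsto> u)) t \<longleftrightarrow> val t v = u \<and> agrees E t"
  by (auto simp: agrees_def)

lemma PLA_intervene_X:
  assumes "PLA T" and "(a,b,c,d,x,y) \<in> T" and "z \<in> settings"
  obtains a' where "(a',b,c,d,z,y) \<in> T"
proof -
  let ?E = "[VB \<mapsto> b, VY \<mapsto> y, VC \<mapsto> c, VD \<mapsto> d]"
  have "possible T ?E"
    using assms(2) unfolding possible_def by force
  moreover have "dom ?E \<subseteq> not_future_X"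
    by (auto simp: not_future_X_def)
  ultimately have "possible T (?E(VX \<mapsto> z))"
    using assms(1,3) by (simp add: PLA_def)
  then show thesis
    using that by (force simp: possible_def)
qed

lemma PLA_intervene_Y:
  assumes "PLA T" and "(a,b,c,d,x,y) \<in> T" and "z \<in> settings"
  obtains b' where "(a,b',c,d,x,z) \<in> T"
proof -
  let ?E = "[VA \<mapsto> a, VX \<mapsto> x, VC \<mapsto> c, VD \<mapsto> d]"
  have "possible T ?E"
    using assms(2) unfolding possible_def by force
  moreover have "dom ?E \<subseteq> not_future_Y"
    by (auto simp: not_future_Y_def)
  ultimately have "possible T (?E(VY \<mapsto> z))"
    using assms(1,3) by (simp add: PLA_def)
  then show thesis
    using that by (force simp: possible_def)
qed

lemma PLF_model_proj_SO:
  assumes "PLF_model T S" and "(a,b,c,d,x,y) \<in> T"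
  shows "(a,b,x,y) \<in> S"
  using assms unfolding PLF_model_def proj_SO_def by force

lemma PLF_model_switch_X:
  assumes M: "PLF_model T S" and t: "(a,b,c,d,x,y) \<in> T"
  shows "(c,b,1,y) \<in> S"
proof -
  obtain a' where t': "(a',b,c,d,1,y) \<in> T"
    using PLA_intervene_X[of T a b c d x y 1] M t by (auto simp: PLF_model_def settings_def)
  moreover have "a' = c"
    using t' M by (auto simp: PLF_model_def protocol_def)
  ultimately show ?thesis
    using M PLF_model_proj_SO by blast
qed

lemma PLF_model_switch_Y:
  assumes M: "PLF_model T S" and t: "(a,b,c,d,x,y) \<in> T"
  shows "(a,d,x,1) \<in> S"
proof -
  obtain b' where t': "(a,b',c,d,x,1) \<in> T"
    using PLA_intervene_Y[of T a b c d x y 1] M t by (auto simp: PLF_model_def settings_def)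
  moreover have "b' = d"
    using t' M by (auto simp: PLF_model_def protocol_def)
  ultimately show ?thesis
    using M PLF_model_proj_SO by blast
qed

lemma PLF_model_switch_both:
  assumes M: "PLF_model T S" and t: "(a,b,c,d,x,y) \<in> T"
  shows "(c,d,1,1) \<in> S"
proof -
  obtain a' where "(a',b,c,d,1,y) \<in> T"
    using PLA_intervene_X[of T a b c d x y 1] M t by (auto simp: PLF_model_def settings_def)
  then obtain b' where t'': "(a',b',c,d,1,1) \<in> T"
    using PLA_intervene_Y[of T a' b c d 1 y 1] M by (auto simp: PLF_model_def settings_def)
  moreover have "a' = c" "b' = d"
    using t'' M by (auto simp: PLF_model_def protocol_def)
  ultimately show ?thesis
    using M PLF_model_proj_SO by blast
qed

lemma hardy_set_no_PLF_model: "\<not> PLF_model T hardy_set"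
proof
  assume M: "PLF_model T hardy_set"
  have "(0,0,2,2) \<in> proj_SO T"
    using M by (simp add: PLF_model_def hardy_set_def SO_space_def outcomes_def settings_def)
  then obtain c d where t: "(0,0,c,d,2,2) \<in> T"
    unfolding proj_SO_def by force
  then have cd: "c \<in> outcomes" "d \<in> outcomes"
    using M by (auto simp: PLF_model_def full_space_def)
  have "c = 1"
    using PLF_model_switch_X[OF M t] cd by (auto simp: hardy_set_def outcomes_def)
  moreover have "d = 1"
    using PLF_model_switch_Y[OF M t] cd by (auto simp: hardy_set_def outcomes_def)
  ultimately show False
    using PLF_model_switch_both[OF M t] by (simp add: hardy_set_def)
qed

theorem theorem4:
  shows "\<exists>S. S \<subseteq> SO_space \<and> PNS S \<and> \<not> (\<exists>T. PLF_model T S)"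
  using hardy_set_subset_SO_space PNS_hardy_set hardy_set_no_PLF_model by blast

end
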